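(* Let $(a_i)_{i\ge0}$ be a quasi-species, let $p_n(\mathbf y)$ be its associated linear sequence of symmetric functions of binomial type, and let $p_n(x)=\Pi\,p_n(\mathbf y)\in\mathbb C[x]$. Let $\mathrm{Gen}(t)=\sum_{i\ge0}a_it^i/i!$. Then, as formal power series in $t$ with coefficients in $\mathbb C[x]$, $$\sum_{n\ge0}p_n(x)\frac{t^n}{n!}=\mathrm{Gen}(t)^x=\exp\big(x\log\mathrm{Gen}(t)\big).$$
   Context: A quasi-species is a sequence $(a_i)_{i\ge0}$ of complex numbers with $a_0=1$ and $a_1\ne0$. The associated linear sequence of binomial type is $$p_n(\mathbf y)=\sum_{\lambda\vdash n}\frac{n!}{\prod_i\lambda_i!}\Big(\prod_i a_{\lambda_i}\Big)m_\lambda(\mathbf y),$$ where $m_\lambda$ is the monomial symmetric function. $\Pi$ is the algebra homomorphism from symmetric functions to $\mathbb C[x]$ given by $$\Pi\, m_\lambda(\mathbf y)=\frac{(x)_{\ell(\lambda)}}{\prod_{j\ge1}\mathrm{mult}_j(\lambda)!}.$$ Here $\ell(\lambda)$ is the number of nonzero parts, $\mathrm{mult}_j(\lambda)$ is the number of parts equal to $j$, and $(x)_k=x(x-1)\cdots(x-k+1)$. For a nonnegative integer $x$, $\Pi$ amounts to setting $y_1=\dots=y_x=1$ and all other variables equal to $0$. Since $a_0=1$, $\log\mathrm{Gen}(t)$ is a well-defined formal power series. *)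

theory Defs
  imports "HOL-Computational_Algebra.Computational_Algebra" "HOL-Library.Multiset"
begin

definition partitions :: "nat \<Rightarrow> nat multiset set" where
  "partitions n = {lam. (\<forall>i\<in>#lam. 0 < i) \<and> sum_mset lam = n}"

definition ffact_poly :: "nat \<Rightarrow> complex poly" where
  "ffact_poly k = (\<Prod>i<k. [:- of_nat i, 1:])"

text \<open>The homomorphism Pi on the monomial basis: Pi m_lambda = (x)_{l(lambda)} / prod_j mult_j(lambda)!.\<close>
definition Pi_m :: "nat multiset \<Rightarrow> complex poly" where
  "Pi_m lam = smult (1 / (\<Prod>j\<in>set_mset lam. fact (count lam j))) (ffact_poly (size lam))"

text \<open>p_n(x) = Pi p_n(y), obtained by applying the linear map Pi termwise to
  p_n(y) = sum_{lambda |- n} n!/prod lambda_i! * prod a_{lambda_i} * m_lambda(y).\<close>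
definition p_poly :: "(nat \<Rightarrow> complex) \<Rightarrow> nat \<Rightarrow> complex poly" where
  "p_poly a n = (\<Sum>lam\<in>partitions n.
      smult (fact n / (\<Prod>i\<in>#lam. fact i) * (\<Prod>i\<in>#lam. a i)) (Pi_m lam))"

definition quasi_species :: "(nat \<Rightarrow> complex) \<Rightarrow> bool" where
  "quasi_species a \<longleftrightarrow> a 0 = 1 \<and> a 1 \<noteq> 0"

definition Gen :: "(nat \<Rightarrow> complex) \<Rightarrow> complex fps" where
  "Gen a = Abs_fps (\<lambda>i. a i / fact i)"

definition fps_log :: "complex fps \<Rightarrow> complex fps" where
  "fps_log F = fps_ln 1 oo (F - 1)"

definition fps_exp_poly :: "complex poly fps \<Rightarrow> complex poly fps" where
  "fps_exp_poly G = Abs_fps (\<lambda>k. [:1 / fact k:]) oo G"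

definition fps_to_poly :: "complex fps \<Rightarrow> complex poly fps" where
  "fps_to_poly F = Abs_fps (\<lambda>n. [:F $ n:])"

end

theory Submission
  imports Defs
begin

text \<open>Both sides have polynomial coefficients, so it suffices to compare them at every natural
  number \<open>x = m\<close>, where both become the \<open>n\<close>-th coefficient of \<open>Gen\<^sup>m\<close>. On the left, \<open>\<Pi>\<close> sets
  \<open>m\<close> variables to 1 and \<open>p_n(m)/n!\<close> becomes the sum over the partitions \<open>\<lambda>\<close> of \<open>n\<close> of
  \<open>(m)_l(\<lambda>) \<Prod> (a_\<lambda>i / \<lambda>i!) / \<Prod>_j mult_j(\<lambda>)!\<close>. Grouped by the length \<open>k\<close>, this is
  \<open>\<Sum>_k (m choose k) [t^n] H^k\<close> with \<open>H = Gen - 1\<close>, because \<open>[t^n] H^k\<close> runs over the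
  \<open>k! / \<Prod>_j mult_j(\<lambda>)!\<close> orderings of the parts of each partition of \<open>n\<close> into \<open>k\<close> parts;
  so it is \<open>[t^n] (1 + H)^m\<close>. On the right, \<open>exp (m log Gen) = (exp (log Gen))^m = Gen^m\<close>.\<close>

lemma member_le_sum_mset: "(i::nat) \<in># M \<Longrightarrow> i \<le> sum_mset M"
  by (simp add: sum_mset.remove)

lemma size_le_sum_mset: "\<forall>i\<in>#M. 0 < (i::nat) \<Longrightarrow> size M \<le> sum_mset M"
  by (induction M) auto

lemma size_le_if_in_partitions: "lam \<in> partitions n \<Longrightarrow> size lam \<le> n"
  unfolding partitions_def using size_le_sum_mset by auto

lemma finite_partitions: "finite (partitions n)"
proof (rule finite_subset)
  show "partitions n \<subseteq> (\<Union>k\<le>n. multisets_of_size {1..n} k)"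
  proof
    fix lam assume lam: "lam \<in> partitions n"
    then have "set_mset lam \<subseteq> {1..n}"
      by (auto simp: partitions_def Suc_le_eq intro: member_le_sum_mset)
    with lam show "lam \<in> (\<Union>k\<le>n. multisets_of_size {1..n} k)"
      by (auto simp: multisets_of_size_def size_le_if_in_partitions)
  qed
qed auto

definition partitions_of_length :: "nat \<Rightarrow> nat \<Rightarrow> nat multiset set" where
  "partitions_of_length k n = {lam \<in> partitions n. size lam = k}"

lemma finite_partitions_of_length: "finite (partitions_of_length k n)"
  unfolding partitions_of_length_def using finite_partitions by simp

lemma partitions_of_length_0: "partitions_of_length 0 n = (if n = 0 then {{#}} else {})"
  unfolding partitions_of_length_def partitions_def by auto

lemma add_mset_in_partitions_of_length_iff:
  "add_mset i M \<in> partitions_of_length (Suc k) n \<longleftrightarrow>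
     i \<in> {1..n} \<and> M \<in> partitions_of_length k (n - i)"
  unfolding partitions_of_length_def partitions_def by auto

lemma in_partitions_of_length_Suc_iff:
  "i \<in># lam \<Longrightarrow> lam \<in> partitions_of_length (Suc k) n \<longleftrightarrow>
     i \<in> {1..n} \<and> lam - {#i#} \<in> partitions_of_length k (n - i)"
  by (metis add_mset_in_partitions_of_length_iff insert_DiffM)

definition mult_fact :: "nat multiset \<Rightarrow> 'a::{comm_semiring_1,semiring_char_0}" where
  "mult_fact lam = (\<Prod>j\<in>set_mset lam. fact (count lam j))"

lemma mult_fact_add_mset:
  "mult_fact (add_mset i M) = of_nat (Suc (count M i)) * mult_fact M"
proof -
  let ?R = "\<lambda>N. \<Prod>j\<in>set_mset M - {i}. fact (count N j)"
  have "mult_fact M = (\<Prod>j\<in>insert i (set_mset M). fact (count M j))"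
    unfolding mult_fact_def by (rule prod.mono_neutral_left) (auto simp: not_in_iff)
  also have "\<dots> = fact (count M i) * ?R M"
    by (simp add: prod.insert_remove)
  finally have "mult_fact M = fact (count M i) * ?R M" .
  moreover have "mult_fact (add_mset i M) = fact (Suc (count M i)) * ?R (add_mset i M)"
    unfolding mult_fact_def by (simp add: prod.insert_remove)
  moreover have "?R (add_mset i M) = ?R M"
    by (rule prod.cong) auto
  ultimately show ?thesis
    by (metis fact_Suc mult.assoc)
qed

definition partition_weight :: "(nat \<Rightarrow> 'a::field_char_0) \<Rightarrow> nat multiset \<Rightarrow> 'a" where
  "partition_weight c lam = (\<Prod>i\<in>#lam. c i) / mult_fact lam"

lemma partition_weight_empty [simp]: "partition_weight c {#} = 1"
  by (simp add: partition_weight_def mult_fact_def)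

lemma partition_weight_cong:
  "(\<And>i. i \<in># lam \<Longrightarrow> c i = d i) \<Longrightarrow> partition_weight c lam = partition_weight d lam"
  unfolding partition_weight_def by (metis image_mset_cong)

lemma partition_weight_add_mset:
  fixes c :: "nat \<Rightarrow> 'a::field_char_0"
  shows "c i * partition_weight c M = of_nat (Suc (count M i)) * partition_weight c (add_mset i M)"
proof -
  have "mult_fact M \<noteq> (0::'a)"
    by (simp add: mult_fact_def)
  then show ?thesis
    unfolding partition_weight_def mult_fact_add_mset
    by (simp add: field_simps del: of_nat_Suc)
qed

text \<open>Removing a part \<open>i\<close> multiplies the weight by \<open>count lam i / c i\<close>, so summing over the
  distinct parts counts every part of \<open>lam\<close> once.\<close>
lemma size_mult_partition_weight:
  fixes c :: "nat \<Rightarrow> 'a::field_char_0"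
  shows "of_nat (size lam) * partition_weight c lam
           = (\<Sum>i\<in>set_mset lam. c i * partition_weight c (lam - {#i#}))"
proof -
  have "c i * partition_weight c (lam - {#i#}) = of_nat (count lam i) * partition_weight c lam"
    if "i \<in># lam" for i
    using partition_weight_add_mset[of c i "lam - {#i#}"] that
    by (simp add: Suc_pred' del: of_nat_Suc)
  then have "(\<Sum>i\<in>set_mset lam. c i * partition_weight c (lam - {#i#}))
               = of_nat (\<Sum>i\<in>set_mset lam. count lam i) * partition_weight c lam"
    by (simp add: sum_distrib_right)
  then show ?thesis
    by (simp add: size_multiset_overloaded_eq)
qed

lemma sum_partition_weight_Suc_length:
  fixes c :: "nat \<Rightarrow> 'a::field_char_0"
  shows "of_nat (Suc k) * (\<Sum>lam\<in>partitions_of_length (Suc k) n. partition_weight c lam)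
           = (\<Sum>i\<in>{1..n}. c i * (\<Sum>mu\<in>partitions_of_length k (n - i). partition_weight c mu))"
proof -
  let ?w = "partition_weight c"
  let ?S = "Sigma (partitions_of_length (Suc k) n) set_mset"
  let ?T = "Sigma {1..n} (\<lambda>i. partitions_of_length k (n - i))"
  have "of_nat (Suc k) * (\<Sum>lam\<in>partitions_of_length (Suc k) n. ?w lam)
          = (\<Sum>lam\<in>partitions_of_length (Suc k) n. of_nat (size lam) * ?w lam)"
    unfolding sum_distrib_left by (rule sum.cong) (auto simp: partitions_of_length_def)
  also have "\<dots> = (\<Sum>(lam, i)\<in>?S. c i * ?w (lam - {#i#}))"
    by (simp add: size_mult_partition_weight sum.Sigma finite_partitions_of_length)
  also have "\<dots> = (\<Sum>(i, mu)\<in>?T. c i * ?w mu)"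
    by (rule sum.reindex_bij_witness[where j = "\<lambda>(lam, i). (i, lam - {#i#})"
          and i = "\<lambda>(i, mu). (add_mset i mu, i)"])
      (auto simp: add_mset_in_partitions_of_length_iff in_partitions_of_length_Suc_iff)
  also have "\<dots> = (\<Sum>i\<in>{1..n}. c i * (\<Sum>mu\<in>partitions_of_length k (n - i). ?w mu))"
    by (simp add: sum.Sigma[symmetric] finite_partitions_of_length sum_distrib_left)
  finally show ?thesis .
qed

lemma fps_power_nth_partitions:
  fixes f :: "'a::field_char_0 fps"
  assumes "f $ 0 = 0"
  shows "(f ^ k) $ n = fact k * (\<Sum>lam\<in>partitions_of_length k n. partition_weight (($) f) lam)"
proof (induction k arbitrary: n)
  case 0
  then show ?case by (simp add: partitions_of_length_0)
next
  case (Suc k)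
  let ?W = "\<lambda>k n. \<Sum>lam\<in>partitions_of_length k n. partition_weight (($) f) lam"
  have "(f ^ Suc k) $ n = (\<Sum>i=0..n. f $ i * (f ^ k) $ (n - i))"
    by (simp add: fps_mult_nth)
  also have "\<dots> = (\<Sum>i=1..n. f $ i * (f ^ k) $ (n - i))"
    using assms by (simp add: sum.atLeast_Suc_atMost)
  also have "\<dots> = fact k * (\<Sum>i=1..n. f $ i * ?W k (n - i))"
    by (simp add: Suc.IH sum_distrib_left mult_ac)
  also have "\<dots> = fact (Suc k) * ?W (Suc k) n"
    by (simp only: sum_partition_weight_Suc_length [symmetric] fact_Suc mult_ac)
  finally show ?case .
qed

lemma smult_p_poly_eq:
  "smult (1 / fact n) (p_poly a n)
     = (\<Sum>lam\<in>partitions n. smult (partition_weight (\<lambda>i. a i / fact i) lam) (ffact_poly (size lam)))"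
proof -
  have prod_fact_nz: "(\<Prod>i\<in>#lam. fact i :: complex) \<noteq> 0" for lam
    by (induction lam) simp_all
  have prod_divide: "(\<Prod>i\<in>#lam. a i / fact i) = (\<Prod>i\<in>#lam. a i) / (\<Prod>i\<in>#lam. fact i)" for lam
    by (induction lam) simp_all
  show ?thesis
    unfolding p_poly_def
    by (rule poly_eqI) (simp add: coeff_sum sum_distrib_left Pi_m_def partition_weight_def
        mult_fact_def prod_divide prod_fact_nz)
qed

lemma poly_ffact_poly: "poly (ffact_poly k) x = fact k * (x gchoose k)"
  by (simp add: ffact_poly_def poly_prod gbinomial_mult_fact lessThan_atLeast0)

lemma poly_smult_p_poly_of_nat:
  assumes "a 0 = 1"
  shows "poly (smult (1 / fact n) (p_poly a n)) (of_nat m) = (Gen a ^ m) $ n"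
proof -
  let ?H = "Gen a - 1"
  let ?C = "\<lambda>k. of_nat (m choose k) * fact k :: complex"
  let ?w = "partition_weight (\<lambda>i. a i / fact i)"
  have "poly (smult (1 / fact n) (p_poly a n)) (of_nat m) = (\<Sum>lam\<in>partitions n. ?C (size lam) * ?w lam)"
    by (simp add: smult_p_poly_eq poly_sum poly_ffact_poly binomial_gbinomial mult_ac)
  also have "\<dots> = (\<Sum>k\<le>n + m. \<Sum>lam\<in>partitions_of_length k n. ?C (size lam) * ?w lam)"
    unfolding partitions_of_length_def
    by (rule sum.group [symmetric]) (auto simp: finite_partitions dest: size_le_if_in_partitions)
  also have "\<dots> = (\<Sum>k\<le>n + m. of_nat (m choose k) * (?H ^ k) $ n)"
  proof (rule sum.cong [OF refl])
    fix k
    have "?w lam = partition_weight (($) ?H) lam" if "lam \<in> partitions_of_length k n" for lam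
    proof (rule partition_weight_cong)
      fix i assume "i \<in># lam"
      with that have "0 < i"
        by (simp add: partitions_of_length_def partitions_def)
      then show "a i / fact i = ?H $ i"
        by (simp add: Gen_def)
    qed
    moreover have "size lam = k" if "lam \<in> partitions_of_length k n" for lam
      using that by (simp add: partitions_of_length_def)
    ultimately show "(\<Sum>lam\<in>partitions_of_length k n. ?C (size lam) * ?w lam)
        = of_nat (m choose k) * (?H ^ k) $ n"
      using assms by (simp add: fps_power_nth_partitions Gen_def sum_distrib_left mult_ac)
  qed
  also have "\<dots> = (\<Sum>k\<le>m. of_nat (m choose k) * (?H ^ k) $ n)"
    by (rule sum.mono_neutral_right) auto
  also have "\<dots> = ((?H + 1) ^ m) $ n"
    unfolding binomial_ring fps_sum_nth by (simp flip: fps_of_nat)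
  finally show ?thesis
    by simp
qed

lemma fps_to_poly_mult: "fps_to_poly (A * B) = fps_to_poly A * fps_to_poly B"
  unfolding fps_to_poly_def
  by (rule fps_ext) (simp add: fps_mult_nth sum_to_poly mult_to_poly mult.commute)

lemma fps_to_poly_power: "fps_to_poly (A ^ k) = fps_to_poly A ^ k"
proof (induction k)
  case 0
  show ?case by (simp add: fps_to_poly_def fps_eq_iff)
next
  case (Suc k)
  then show ?case by (simp add: fps_to_poly_mult)
qed

lemma poly_fps_exp_poly_nth:
  "poly (fps_exp_poly (fps_const [:0, 1:] * fps_to_poly L) $ n) x = (fps_exp x oo L) $ n"
  unfolding fps_exp_poly_def fps_compose_nth power_mult_distrib fps_const_power
    fps_to_poly_power [symmetric]
  by (simp add: poly_sum fps_to_poly_def field_simps)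

lemma fps_log_nth_0 [simp]: "fps_log G $ 0 = 0"
  by (simp add: fps_log_def)

lemma fps_exp_compose_fps_log:
  assumes "G $ 0 = 1"
  shows "fps_exp 1 oo fps_log G = G"
proof -
  have G0: "(G - 1) $ 0 = 0"
    using assms by simp
  have "(fps_exp 1 - 1) oo fps_ln (1::complex) = fps_X"
    unfolding fps_ln_fps_exp_inv [of 1, simplified] by (rule fps_inv_right) simp_all
  then have "fps_exp 1 oo fps_ln (1::complex) = fps_X + 1"
    by (simp add: fps_compose_sub_distrib algebra_simps)
  then have "fps_exp 1 oo fps_log G = (fps_X + 1) oo (G - 1)"
    unfolding fps_log_def by (simp add: fps_compose_assoc [OF G0])
  also have "\<dots> = G"
    using G0 by (simp add: fps_compose_add_distrib)
  finally show ?thesis .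
qed

lemma poly_fps_exp_poly_log_of_nat:
  assumes "G $ 0 = 1"
  shows "poly (fps_exp_poly (fps_const [:0, 1:] * fps_to_poly (fps_log G)) $ n) (of_nat m) = (G ^ m) $ n"
proof -
  have "fps_exp (of_nat m) = fps_exp (1::complex) ^ m"
    by (simp add: fps_exp_power_mult)
  also have "\<dots> oo fps_log G = (fps_exp 1 oo fps_log G) ^ m"
    by (simp add: fps_compose_power)
  finally show ?thesis
    by (simp add: poly_fps_exp_poly_nth fps_exp_compose_fps_log assms)
qed

lemma poly_eqI_of_nat:
  fixes p q :: "'a::{idom, ring_char_0} poly"
  assumes "\<And>m. poly p (of_nat m) = poly q (of_nat m)"
  shows "p = q"
proof (rule ccontr)
  assume "p \<noteq> q"
  then have "finite {x. poly (p - q) x = 0}"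
    by (intro poly_roots_finite) simp
  moreover have "range (of_nat :: nat \<Rightarrow> 'a) \<subseteq> {x. poly (p - q) x = 0}"
    using assms by auto
  ultimately have "finite (range (of_nat :: nat \<Rightarrow> 'a))"
    by (rule finite_subset [rotated])
  then show False
    by (metis finite_imageD inj_of_nat infinite_UNIV_nat)
qed

theorem mainTheorem4:
  fixes a :: "nat \<Rightarrow> complex"
  assumes "quasi_species a"
  shows "Abs_fps (\<lambda>n. smult (1 / fact n) (p_poly a n))
       = fps_exp_poly (fps_const [:0, 1:] * fps_to_poly (fps_log (Gen a)))"
proof (rule fps_ext)
  fix n
  from assms have "a 0 = 1" and "Gen a $ 0 = 1"
    by (simp_all add: quasi_species_def Gen_def)
  then show "Abs_fps (\<lambda>n. smult (1 / fact n) (p_poly a n)) $ n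
      = fps_exp_poly (fps_const [:0, 1:] * fps_to_poly (fps_log (Gen a))) $ n"
    unfolding fps_nth_Abs_fps
    by (intro poly_eqI_of_nat) (simp only: poly_smult_p_poly_of_nat poly_fps_exp_poly_log_of_nat)
qed

end
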